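(* Let $G(z)=\sum_{n=1}^\infty\frac{i}{(z+(n-\frac12)i)^2}$, the meromorphic extension of the Cauchy transform of the logistic distribution $\mu_2(dx)=\frac{\pi}{2\cosh^2(\pi x)}dx$. Then (i) $\operatorname{Re}G(x+yi)>0$ for all $x>0$ and $y\ge-\frac12$; and (ii) $\operatorname{Im}G(yi)<0$ for all $y>-\frac12$. *)

theory Defs
  imports Complex_Main
begin

text \<open>G(z) = sum over n >= 1 of i / (z + (n - 1/2) i)^2; reindexed with n starting at 0,
  so that n - 1/2 becomes n + 1/2.\<close>
definition G :: "complex \<Rightarrow> complex" where
  "G z = (\<Sum>n. \<i> / (z + (of_nat n + 1/2) * \<i>)\<^sup>2)"

end

theory Submission
  imports Defs "HOL-Analysis.Summation_Tests"
begin

text \<open>The \<open>n\<close>-th summand of \<open>G (x + yi)\<close> is \<open>i / (x + bi)\<^sup>2\<close> with \<open>b = y + n + 1/2\<close>. Its real part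
  \<open>2xb / (x\<^sup>2 + b\<^sup>2)\<^sup>2\<close> is nonnegative when \<open>x > 0\<close> and \<open>y \<ge> -1/2\<close>, and positive for \<open>n \<ge> 1\<close> (the
  \<open>n = 0\<close> term vanishes at \<open>y = -1/2\<close>); on the imaginary axis its imaginary part is \<open>-1/b\<^sup>2 < 0\<close>.
  The series converges absolutely by comparison with \<open>\<Sum> 1/n\<^sup>2\<close>, so these signs pass to the sum.\<close>

definition G_term :: "complex \<Rightarrow> nat \<Rightarrow> complex" where
  "G_term z n = \<i> / (z + (of_nat n + 1/2) * \<i>)\<^sup>2"

lemma G_eq_suminf_G_term: "G z = (\<Sum>n. G_term z n)"
  unfolding G_def G_term_def ..

lemma G_term_Complex: "G_term (Complex x y) n = \<i> / (Complex x (y + real n + 1/2))\<^sup>2"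
proof -
  have "Complex x y + (of_nat n + 1/2) * \<i> = Complex x (y + real n + 1/2)"
    by (simp add: complex_eq_iff)
  then show ?thesis by (simp add: G_term_def)
qed

lemma Re_ii_divide_square: "Re (\<i> / (Complex x b)\<^sup>2) = 2 * x * b / (x\<^sup>2 + b\<^sup>2)\<^sup>2"
proof -
  have "(x*x - b*b) * (x*x - b*b) + 4 * (b * (x * (b*x))) = (x*x + b*b) * (x*x + b*b)"
    by algebra
  then show ?thesis by (simp add: Re_divide power2_eq_square cmod_def)
qed

lemma Im_ii_divide_square: "Im (\<i> / (Complex x b)\<^sup>2) = (x\<^sup>2 - b\<^sup>2) / (x\<^sup>2 + b\<^sup>2)\<^sup>2"
proof -
  have "(x*x - b*b) * (x*x - b*b) + 4 * (b * (x * (b*x))) = (x*x + b*b) * (x*x + b*b)"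
    by algebra
  then show ?thesis by (simp add: Im_divide power2_eq_square cmod_def)
qed

lemma Re_ii_divide_square_nonneg: "0 \<le> x \<Longrightarrow> 0 \<le> b \<Longrightarrow> 0 \<le> Re (\<i> / (Complex x b)\<^sup>2)"
  by (simp add: Re_ii_divide_square)

lemma Re_ii_divide_square_pos: "0 < x \<Longrightarrow> 0 < b \<Longrightarrow> 0 < Re (\<i> / (Complex x b)\<^sup>2)"
  by (simp add: Re_ii_divide_square)

lemma Im_ii_divide_square_imaginary_neg: "b \<noteq> 0 \<Longrightarrow> Im (\<i> / (Complex 0 b)\<^sup>2) < 0"
  by (simp add: Im_ii_divide_square)

lemma norm_G_term_le:
  assumes "Im z \<ge> -1/2" "n \<ge> 1"
  shows "norm (G_term z n) \<le> inverse (real n ^ 2)"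
proof -
  define w where "w = z + (of_nat n + 1/2) * \<i>"
  have "real n \<le> Im w"
    using assms(1) by (simp add: w_def)
  also have "\<dots> \<le> norm w"
    using abs_Im_le_cmod by (rule abs_le_D1)
  finally have "real n ^ 2 \<le> norm w ^ 2"
    by (rule power_mono) simp
  then have "inverse (norm w ^ 2) \<le> inverse (real n ^ 2)"
    using assms(2) by (intro le_imp_inverse_le) auto
  moreover have "norm (G_term z n) = inverse (norm w ^ 2)"
    unfolding G_term_def w_def[symmetric] by (simp add: norm_divide norm_power inverse_eq_divide)
  ultimately show ?thesis
    by simp
qed

lemma summable_G_term:
  assumes "Im z \<ge> -1/2"
  shows "summable (G_term z)"
proof (rule summable_comparison_test')
  show "summable (\<lambda>n. inverse (real n ^ 2))"
    by (rule inverse_power_summable) simp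
  show "norm (G_term z n) \<le> inverse (real n ^ 2)" if "n \<ge> 1" for n
    using assms that by (rule norm_G_term_le)
qed

lemma Re_G_pos:
  assumes "x > 0" "y \<ge> -1/2"
  shows "Re (G (Complex x y)) > 0"
proof -
  have summable: "summable (G_term (Complex x y))"
    using assms(2) by (intro summable_G_term) simp
  have "0 < (\<Sum>n. Re (G_term (Complex x y) n))"
  proof (rule suminf_pos2[where i=1])
    show "summable (\<lambda>n. Re (G_term (Complex x y) n))"
      using summable by (rule summable_Re)
    show "0 \<le> Re (G_term (Complex x y) n)" for n
      unfolding G_term_Complex using assms by (intro Re_ii_divide_square_nonneg) auto
    show "0 < Re (G_term (Complex x y) 1)"
      unfolding G_term_Complex using assms by (intro Re_ii_divide_square_pos) auto
  qed
  then show ?thesis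
    by (simp add: G_eq_suminf_G_term Re_suminf[OF summable])
qed

lemma Im_G_imaginary_axis_neg:
  assumes "y > -1/2"
  shows "Im (G (Complex 0 y)) < 0"
proof -
  have summable: "summable (G_term (Complex 0 y))"
    using assms by (intro summable_G_term) simp
  have "0 < (\<Sum>n. - Im (G_term (Complex 0 y) n))"
  proof (rule suminf_pos)
    show "summable (\<lambda>n. - Im (G_term (Complex 0 y) n))"
      using summable by (intro summable_minus summable_Im)
    show "0 < - Im (G_term (Complex 0 y) n)" for n
      unfolding G_term_Complex neg_0_less_iff_less using assms
      by (intro Im_ii_divide_square_imaginary_neg) simp
  qed
  then show ?thesis
    by (simp add: G_eq_suminf_G_term Im_suminf[OF summable] suminf_minus[OF summable_Im[OF summable]])
qed

theorem mainTheorem8: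
  shows "(\<forall>x y::real. x > 0 \<and> y \<ge> -1/2 \<longrightarrow> Re (G (Complex x y)) > 0)
       \<and> (\<forall>y::real. y > -1/2 \<longrightarrow> Im (G (Complex 0 y)) < 0)"
  using Re_G_pos Im_G_imaginary_axis_neg by blast

end
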